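(* Let $X$ be a finite set with similarity function $S$, and suppose the target clustering $\mathcal{C}^{\ast}$ satisfies stability with respect to $S$. Let $C_i,C_j$ be disjoint nonempty subsets of $X$ such that some target cluster meets both $C_i$ and $C_j$. If the unrestricted merge procedure (described below) applied to $C_i,C_j$ outputs the single cluster $C_i\cup C_j$, then there is a target cluster $C^{\ast}_l$ with $C_i\subseteq C^{\ast}_l$ and $C_j\subseteq C^{\ast}_l$.
   Context: For nonempty $A,A'\subseteq X$, $S(A,A')$ is the average of $S(x,y)$ over $x\in A,y\in A'$. $\mathcal{C}^{\ast}=\{C^{\ast}_1,\dots,C^{\ast}_k\}$ satisfies stability w.r.t. $S$ if for all $i\neq j$, every nonempty proper $A\subset C^{\ast}_i$ and nonempty $A'\subseteq C^{\ast}_j$: $S(A,C^{\ast}_i\setminus A)>S(A,A')$. Average-linkage tree $T_{glob}$ of $X$: leaves are singletons; repeatedly merge the two current nodes $N_1,N_2$ with largest $S(N_1,N_2)$ (ties arbitrary) into parent $N_1\cup N_2$ until the root $X$ remains. Split$(Y)$ for $|Y|\ge2$: let $N$ be the deepest node of $T_{glob}$ containing $Y$, with children $N_1,N_2$; output $Y\cap N_1$, $Y\cap N_2$. Unrestricted merge procedure on $C_i,C_j$: let $C'_i,C'_j$ be the output of Split$(C_i\cup C_j)$; if $\{C'_i,C'_j\}=\{C_i,C_j\}$ output the single cluster $C_i\cup C_j$, otherwise output the two clusters $C'_i,C'_j$. *)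

theory Defs
  imports Complex_Main
begin

definition avg_sim :: "('a \<Rightarrow> 'a \<Rightarrow> real) \<Rightarrow> 'a set \<Rightarrow> 'a set \<Rightarrow> real" where
  "avg_sim S A B = (\<Sum>x\<in>A. \<Sum>y\<in>B. S x y) / (real (card A) * real (card B))"

definition is_clustering :: "'a set \<Rightarrow> 'a set set \<Rightarrow> bool" where
  "is_clustering X CC \<longleftrightarrow> \<Union>CC = X \<and> (\<forall>C\<in>CC. C \<noteq> {}) \<and>
     (\<forall>C\<in>CC. \<forall>D\<in>CC. C \<noteq> D \<longrightarrow> C \<inter> D = {})"

definition stable :: "('a \<Rightarrow> 'a \<Rightarrow> real) \<Rightarrow> 'a set set \<Rightarrow> bool" where
  "stable S CC \<longleftrightarrow> (\<forall>Ci\<in>CC. \<forall>Cj\<in>CC. Ci \<noteq> Cj \<longrightarrow>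
      (\<forall>A A'. A \<noteq> {} \<and> A \<subset> Ci \<and> A' \<noteq> {} \<and> A' \<subseteq> Cj \<longrightarrow>
          avg_sim S A (Ci - A) > avg_sim S A A'))"

text \<open>A state consists of the current nodes P and the
  merges performed so far, recorded as triples (parent, child1, child2).
  Ties are broken arbitrarily (any maximising pair may be merged).\<close>
inductive al_run :: "('a \<Rightarrow> 'a \<Rightarrow> real) \<Rightarrow> 'a set \<Rightarrow> 'a set set \<Rightarrow>
    ('a set \<times> 'a set \<times> 'a set) set \<Rightarrow> bool" for S X where
  init: "al_run S X ((\<lambda>x. {x}) ` X) {}"
| step: "al_run S X P T \<Longrightarrow> N1 \<in> P \<Longrightarrow> N2 \<in> P \<Longrightarrow> N1 \<noteq> N2 \<Longrightarrow>
     (\<forall>M1\<in>P. \<forall>M2\<in>P. M1 \<noteq> M2 \<longrightarrow> avg_sim S M1 M2 \<le> avg_sim S N1 N2) \<Longrightarrow>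
     al_run S X (insert (N1 \<union> N2) (P - {N1, N2})) (insert (N1 \<union> N2, N1, N2) T)"

definition avg_linkage_tree :: "('a \<Rightarrow> 'a \<Rightarrow> real) \<Rightarrow> 'a set \<Rightarrow>
    ('a set \<times> 'a set \<times> 'a set) set \<Rightarrow> bool" where
  "avg_linkage_tree S X T \<longleftrightarrow> al_run S X {X} T"

definition tree_nodes :: "'a set \<Rightarrow> ('a set \<times> 'a set \<times> 'a set) set \<Rightarrow> 'a set set" where
  "tree_nodes X T = ((\<lambda>x. {x}) ` X) \<union> fst ` T"

text \<open>Split(Y) w.r.t. tree T outputs (A, B): N is the deepest node containing Y
  (the smallest such node; nodes form a laminar tree), with children N1, N2.\<close>
definition split_out :: "'a set \<Rightarrow> ('a set \<times> 'a set \<times> 'a set) set \<Rightarrow> 'a set \<Rightarrow>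
    'a set \<Rightarrow> 'a set \<Rightarrow> bool" where
  "split_out X T Y A B \<longleftrightarrow> (\<exists>N N1 N2. N \<in> tree_nodes X T \<and> Y \<subseteq> N \<and>
      (\<forall>M\<in>tree_nodes X T. Y \<subseteq> M \<longrightarrow> N \<subseteq> M) \<and>
      (N, N1, N2) \<in> T \<and> A = Y \<inter> N1 \<and> B = Y \<inter> N2)"

end

theory Submission
  imports Defs "HOL-Library.Disjoint_Sets"
begin

text \<open>Under stability, no merge of average linkage ever crosses a target cluster: if a node
  \<open>A\<close> sits strictly inside a cluster \<open>C\<close>, then by stability \<open>A\<close> is more similar on average to
  \<open>C - A\<close> than to anything outside \<open>C\<close>, and since \<open>C - A\<close> is a union of current nodes, one of
  them beats every candidate outside \<open>C\<close>. Hence every node of the tree is laminar to the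
  target clustering. If Split returns \<open>C\<^sub>i, C\<^sub>j\<close> and a target cluster meets both, that cluster
  meets both children of the splitting node, so being laminar it contains both children and
  therefore \<open>C\<^sub>i \<union> C\<^sub>j\<close>.\<close>

lemma is_clustering_iff_partition_on: "is_clustering X CC \<longleftrightarrow> partition_on X CC"
  by (auto simp: is_clustering_def partition_on_def disjoint_def)

lemma avg_sim_commute:
  assumes "\<forall>x y. S x y = S y x"
  shows "avg_sim S A B = avg_sim S B A"
  unfolding avg_sim_def using assms by (subst sum.swap) (simp add: mult.commute)

lemma sum_sim_eq_avg_sim:
  assumes "finite A" "A \<noteq> {}" "finite B" "B \<noteq> {}"
  shows "(\<Sum>x\<in>A. \<Sum>y\<in>B. S x y) = avg_sim S A B * real (card A) * real (card B)"
  using assms by (simp add: avg_sim_def card_gt_0_iff)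

lemma avg_sim_le_some_part:
  assumes "finite A" "A \<noteq> {}" "finite B" "B \<noteq> {}" and F: "partition_on B F"
  shows "\<exists>D\<in>F. avg_sim S A B \<le> avg_sim S A D"
proof (rule ccontr)
  assume "\<not> ?thesis"
  hence less: "avg_sim S A D < avg_sim S A B" if "D \<in> F" for D
    using that by (meson not_le)
  have UF: "\<Union>F = B" and "disjoint F" and "{} \<notin> F"
    using F by (auto simp: partition_on_def)
  have finF: "finite F" using finite_elements[OF \<open>finite B\<close> F] .
  have fin_parts: "finite D" "D \<noteq> {}" if "D \<in> F" for D
    using that UF \<open>finite B\<close> \<open>{} \<notin> F\<close> by (auto intro: finite_subset)
  have "F \<noteq> {}" using UF \<open>B \<noteq> {}\<close> by auto
  have "(\<Sum>x\<in>A. \<Sum>y\<in>B. S x y) = (\<Sum>D\<in>F. \<Sum>x\<in>A. \<Sum>y\<in>D. S x y)"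
    unfolding UF[symmetric] using fin_parts \<open>disjoint F\<close>
    by (subst sum.swap, subst sum.Union_disjoint) (auto simp: disjoint_def)
  also have "\<dots> = (\<Sum>D\<in>F. avg_sim S A D * real (card A) * real (card D))"
    using fin_parts assms(1,2) by (simp add: sum_sim_eq_avg_sim)
  also have "\<dots> < (\<Sum>D\<in>F. avg_sim S A B * real (card A) * real (card D))"
    using finF \<open>F \<noteq> {}\<close> fin_parts less assms(2) \<open>finite A\<close>
    by (intro sum_strict_mono) (auto simp: card_gt_0_iff)
  also have "\<dots> = avg_sim S A B * real (card A) * real (card B)"
    using card_Union_disjoint[OF \<open>disjoint F\<close> fin_parts(1)] UF
    by (simp add: sum_distrib_left)
  also have "\<dots> = (\<Sum>x\<in>A. \<Sum>y\<in>B. S x y)"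
    using assms(1-4) by (simp add: sum_sim_eq_avg_sim)
  finally show False by simp
qed

definition laminar_to :: "'a set set \<Rightarrow> 'a set \<Rightarrow> bool" where
  "laminar_to CC M \<longleftrightarrow> (\<forall>C\<in>CC. M \<subseteq> C \<or> C \<subseteq> M \<or> M \<inter> C = {})"

lemma laminar_to_singleton: "laminar_to CC {x}"
  by (auto simp: laminar_to_def)

lemma laminar_to_Un:
  assumes "laminar_to CC N1" "laminar_to CC N2"
    and "\<And>C. C \<in> CC \<Longrightarrow> N1 \<subset> C \<Longrightarrow> N2 \<inter> C \<noteq> {}"
    and "\<And>C. C \<in> CC \<Longrightarrow> N2 \<subset> C \<Longrightarrow> N1 \<inter> C \<noteq> {}"
  shows "laminar_to CC (N1 \<union> N2)"
  unfolding laminar_to_def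
proof
  fix C assume "C \<in> CC"
  with assms have "N1 \<subseteq> C \<or> C \<subseteq> N1 \<or> N1 \<inter> C = {}" "N2 \<subseteq> C \<or> C \<subseteq> N2 \<or> N2 \<inter> C = {}"
    "N1 \<subset> C \<Longrightarrow> N2 \<inter> C \<noteq> {}" "N2 \<subset> C \<Longrightarrow> N1 \<inter> C \<noteq> {}"
    by (auto simp: laminar_to_def)
  then show "N1 \<union> N2 \<subseteq> C \<or> C \<subseteq> N1 \<union> N2 \<or> (N1 \<union> N2) \<inter> C = {}"
    by auto
qed

lemma laminar_to_subset_cluster:
  assumes "laminar_to CC M" "C \<in> CC" "M \<inter> C \<noteq> {}" "\<not> C \<subseteq> M"
  shows "M \<subseteq> C"
  using assms unfolding laminar_to_def by blast

lemma stableD: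
  assumes "stable S CC" "Ci \<in> CC" "Cj \<in> CC" "Ci \<noteq> Cj"
    and "A \<noteq> {}" "A \<subset> Ci" "A' \<noteq> {}" "A' \<subseteq> Cj"
  shows "avg_sim S A A' < avg_sim S A (Ci - A)"
  using assms unfolding stable_def by blast

lemma stable_avg_sim_less_outside:
  assumes st: "stable S CC" and CC: "partition_on X CC" and "finite X"
    and C: "C \<in> CC" and A: "A \<noteq> {}" "A \<subset> C"
    and B: "B \<noteq> {}" "B \<subseteq> X" "B \<inter> C = {}"
  shows "avg_sim S A B < avg_sim S A (C - A)"
proof -
  have "C \<subseteq> X" using C partition_onD1[OF CC] by blast
  have "partition_on B ((\<inter>) B ` CC - {{}})"
    using partition_on_restrict[OF CC, of B] B(2) by (simp add: Int_absorb2)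
  moreover have "finite A" using A(2) \<open>C \<subseteq> X\<close> \<open>finite X\<close> by (meson finite_subset psubset_imp_subset)
  moreover have "finite B" using B(2) \<open>finite X\<close> by (rule finite_subset)
  ultimately obtain D where D: "D \<in> CC" "B \<inter> D \<noteq> {}"
    and le: "avg_sim S A B \<le> avg_sim S A (B \<inter> D)"
    using avg_sim_le_some_part[OF _ A(1) _ B(1)] by blast
  have "C \<noteq> D" using D(2) B(3) by auto
  have "avg_sim S A (B \<inter> D) < avg_sim S A (C - A)"
    using stableD[OF st C D(1) \<open>C \<noteq> D\<close> A D(2)] by simp
  with le show ?thesis by linarith
qed

lemma avg_sim_complement_le_node:
  assumes P: "partition_on X P" "\<forall>M\<in>P. laminar_to CC M" and "finite X"
    and C: "C \<in> CC" "C \<subseteq> X" and A: "A \<in> P" "A \<subset> C"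
  shows "\<exists>M\<in>P. M \<noteq> A \<and> avg_sim S A (C - A) \<le> avg_sim S A M"
proof -
  define G where "G = {M\<in>P. M \<noteq> A \<and> M \<subseteq> C}"
  have U: "\<Union>P = X" and D: "disjoint P" and E: "{} \<notin> P"
    using P(1) by (auto simp: partition_on_def)
  have disj: "M \<inter> A = {}" if "M \<in> P" "M \<noteq> A" for M
    using D that A(1) by (auto simp: disjoint_def)
  have "A \<noteq> {}" using E A(1) by auto
  have "\<Union>G = C - A"
  proof
    show "\<Union>G \<subseteq> C - A" using disj unfolding G_def by blast
    show "C - A \<subseteq> \<Union>G"
    proof
      fix x assume x: "x \<in> C - A"
      then obtain M where M: "M \<in> P" "x \<in> M" using C(2) U by blast
      have "M \<noteq> A" using x M by auto
      have "\<not> C \<subseteq> M" using disj[OF M(1) \<open>M \<noteq> A\<close>] A(2) \<open>A \<noteq> {}\<close> by blast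
      hence "M \<subseteq> C" using laminar_to_subset_cluster[OF _ C(1)] P(2) M x by blast
      thus "x \<in> \<Union>G" using M \<open>M \<noteq> A\<close> unfolding G_def by blast
    qed
  qed
  moreover have "disjoint G" using D by (rule pairwise_subset) (auto simp: G_def)
  moreover have "{} \<notin> G" using E by (auto simp: G_def)
  ultimately have "partition_on (C - A) G" by (simp add: partition_on_def)
  moreover have "finite A" "finite (C - A)"
    using A(1) U C(2) \<open>finite X\<close> by (auto intro: finite_subset)
  moreover have "C - A \<noteq> {}" using A(2) by blast
  ultimately obtain M where "M \<in> G" "avg_sim S A (C - A) \<le> avg_sim S A M"
    using avg_sim_le_some_part[OF _ \<open>A \<noteq> {}\<close>] by blast
  then show ?thesis unfolding G_def by blast
qed

lemma best_partner_meets_cluster: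
  assumes st: "stable S CC" and CC: "partition_on X CC" and "finite X"
    and P: "partition_on X P" "\<forall>M\<in>P. laminar_to CC M"
    and A: "A \<in> P" and B: "B \<in> P" "B \<noteq> A"
    and max: "\<forall>M\<in>P. M \<noteq> A \<longrightarrow> avg_sim S A M \<le> avg_sim S A B"
    and C: "C \<in> CC" "A \<subset> C"
  shows "B \<inter> C \<noteq> {}"
proof
  assume "B \<inter> C = {}"
  have "A \<noteq> {}" "B \<noteq> {}" "B \<subseteq> X" "C \<subseteq> X"
    using P(1) CC A B C(1) by (auto simp: partition_on_def)
  then obtain M where "M \<in> P" "M \<noteq> A" "avg_sim S A (C - A) \<le> avg_sim S A M"
    using avg_sim_complement_le_node[OF P \<open>finite X\<close> C(1) _ A C(2)] by blast
  moreover have "avg_sim S A B < avg_sim S A (C - A)"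
    using stable_avg_sim_less_outside[OF st CC \<open>finite X\<close> C(1) \<open>A \<noteq> {}\<close> C(2)]
      \<open>B \<noteq> {}\<close> \<open>B \<subseteq> X\<close> \<open>B \<inter> C = {}\<close> by blast
  ultimately show False using max by fastforce
qed

lemma partition_on_merge:
  assumes "partition_on X P" "N1 \<in> P" "N2 \<in> P" "N1 \<noteq> N2"
  shows "partition_on X (insert (N1 \<union> N2) (P - {N1, N2}))"
proof -
  have U: "\<Union>P = X" and D: "disjoint P" and E: "{} \<notin> P"
    using assms(1) by (auto simp: partition_on_def)
  have "(N1 \<union> N2) \<inter> M = {}" if "M \<in> P - {N1, N2}" for M
    using D that assms(2,3) by (auto simp: disjoint_def)
  moreover have "disjoint (P - {N1, N2})" using D by (rule pairwise_subset) blast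
  ultimately have "disjoint (insert (N1 \<union> N2) (P - {N1, N2}))"
    by (auto simp: pairwise_insert disjnt_def)
  moreover have "\<Union>(insert (N1 \<union> N2) (P - {N1, N2})) = X" using U assms(2,3) by auto
  ultimately show ?thesis using E assms(2) unfolding partition_on_def by auto
qed

lemma al_run_laminar:
  assumes run: "al_run S X P T" and "finite X" and sym: "\<forall>x y. S x y = S y x"
    and CC: "partition_on X CC" and st: "stable S CC"
  shows "partition_on X P \<and> (\<forall>M\<in>P. laminar_to CC M) \<and>
    (\<forall>(N, N1, N2)\<in>T. N = N1 \<union> N2 \<and> N1 \<inter> N2 = {} \<and> laminar_to CC N1 \<and> laminar_to CC N2)"
  using run
proof (induction rule: al_run.induct)
  case init
  show ?case by (auto simp: partition_on_singletons laminar_to_singleton)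
next
  case (step P T N1 N2)
  have P: "partition_on X P" "\<forall>M\<in>P. laminar_to CC M" using step.IH by auto
  have "N1 \<inter> N2 = {}" using P(1) step.hyps(2-4) by (auto simp: partition_on_def disjoint_def)
  have max1: "\<forall>M\<in>P. M \<noteq> N1 \<longrightarrow> avg_sim S N1 M \<le> avg_sim S N1 N2"
    using step.hyps(2,5) by blast
  have max2: "\<forall>M\<in>P. M \<noteq> N2 \<longrightarrow> avg_sim S N2 M \<le> avg_sim S N2 N1"
    using step.hyps(3,5) avg_sim_commute[OF sym] by metis
  have "laminar_to CC (N1 \<union> N2)"
  proof (rule laminar_to_Un)
    show "laminar_to CC N1" "laminar_to CC N2" using P(2) step.hyps(2,3) by auto
    show "N2 \<inter> C \<noteq> {}" if "C \<in> CC" "N1 \<subset> C" for C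
      using best_partner_meets_cluster[OF st CC \<open>finite X\<close> P step.hyps(2,3) _ max1 that]
        step.hyps(4) by blast
    show "N1 \<inter> C \<noteq> {}" if "C \<in> CC" "N2 \<subset> C" for C
      using best_partner_meets_cluster[OF st CC \<open>finite X\<close> P step.hyps(3,2) _ max2 that]
        step.hyps(4) by blast
  qed
  with step.IH step.hyps(2-4) \<open>N1 \<inter> N2 = {}\<close> partition_on_merge[OF P(1) step.hyps(2-4)]
  show ?case by auto
qed

theorem lemma21:
  fixes X :: "'a set" and S :: "'a \<Rightarrow> 'a \<Rightarrow> real" and CC :: "'a set set"
    and T :: "('a set \<times> 'a set \<times> 'a set) set"
    and Ci Cj Ci' Cj' :: "'a set"
  assumes "finite X"
    and "\<forall>x y. S x y = S y x"
    and "is_clustering X CC"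
    and "stable S CC"
    and "avg_linkage_tree S X T"
    and "Ci \<subseteq> X" and "Cj \<subseteq> X" and "Ci \<noteq> {}" and "Cj \<noteq> {}" and "Ci \<inter> Cj = {}"
    and "\<exists>C\<in>CC. C \<inter> Ci \<noteq> {} \<and> C \<inter> Cj \<noteq> {}"
    and "split_out X T (Ci \<union> Cj) Ci' Cj'"
    and "{Ci', Cj'} = {Ci, Cj}"
  shows "\<exists>C\<in>CC. Ci \<subseteq> C \<and> Cj \<subseteq> C"
proof -
  obtain N N1 N2 where N: "Ci \<union> Cj \<subseteq> N" "(N, N1, N2) \<in> T"
    and split: "Ci' = (Ci \<union> Cj) \<inter> N1" "Cj' = (Ci \<union> Cj) \<inter> N2"
    using assms(12) unfolding split_out_def by blast
  have "N = N1 \<union> N2" "N1 \<inter> N2 = {}" "laminar_to CC N1" "laminar_to CC N2"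
    using al_run_laminar[OF assms(5)[unfolded avg_linkage_tree_def] assms(1,2)
        assms(3)[unfolded is_clustering_iff_partition_on] assms(4)] N(2)
    by auto
  moreover obtain C where C: "C \<in> CC" "C \<inter> Ci \<noteq> {}" "C \<inter> Cj \<noteq> {}"
    using assms(11) by blast
  moreover have "N1 \<inter> C \<noteq> {}" "N2 \<inter> C \<noteq> {}"
    using assms(13) split C(2,3) by (auto simp: doubleton_eq_iff)
  ultimately have "N1 \<subseteq> C" "N2 \<subseteq> C"
    using laminar_to_subset_cluster by blast+
  thus ?thesis using N(1) \<open>N = N1 \<union> N2\<close> C(1) by blast
qed

end
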